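(* Let $p\in(0,1]$, let $X\ne\{0\}$ be a finite-dimensional $p$-Banach space and let $Z\subset B_X$ be a symmetric set with $\mathrm{co}_p(Z)=B_X$. Let $\mathcal B$ be the set of all algebraic bases of $X$ consisting of points of $Z$. Then for every $x\in X$, \[\|x\|=\min\Big\{\Big(\sum_{b\in\mathfrak b}|a_b|^p\Big)^{1/p}:\mathfrak b\in\mathcal B,\ a\in\mathbb R^{\mathfrak b}\text{ with }x=\sum_{b\in\mathfrak b}a_bb\Big\}.\]
   Context: A $p$-Banach space is a complete vector space with a $p$-norm (norm axioms with $\|x+y\|^p\le\|x\|^p+\|y\|^p$ replacing the triangle inequality); $B_X$ is its closed unit ball. A set $A\subset X$ is $p$-convex if $\lambda x+\mu y\in A$ whenever $x,y\in A$ and $\lambda,\mu\ge0$ with $\lambda^p+\mu^p=1$; $\mathrm{co}_p(A)$ is the smallest $p$-convex set containing $A$. $Z$ symmetric means $Z=-Z$. *)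

theory Defs
  imports "HOL-Analysis.Analysis"
begin

definition is_pnorm :: "real \<Rightarrow> ('a::real_vector \<Rightarrow> real) \<Rightarrow> bool" where
  "is_pnorm p N \<longleftrightarrow>
     (\<forall>x. 0 \<le> N x) \<and> (\<forall>x. N x = 0 \<longleftrightarrow> x = 0) \<and>
     (\<forall>c x. N (c *\<^sub>R x) = \<bar>c\<bar> * N x) \<and>
     (\<forall>x y. N (x + y) powr p \<le> N x powr p + N y powr p)"

definition pnorm_complete :: "('a::real_vector \<Rightarrow> real) \<Rightarrow> bool" where
  "pnorm_complete N \<longleftrightarrow>
     (\<forall>f::nat \<Rightarrow> 'a. (\<forall>e>0. \<exists>M. \<forall>m\<ge>M. \<forall>n\<ge>M. N (f m - f n) < e) \<longrightarrow>
        (\<exists>l. (\<lambda>n. N (f n - l)) \<longlonglongrightarrow> 0))"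

definition is_pBanach :: "real \<Rightarrow> ('a::real_vector \<Rightarrow> real) \<Rightarrow> bool" where
  "is_pBanach p N \<longleftrightarrow> is_pnorm p N \<and> pnorm_complete N"

definition unit_ball :: "('a::real_vector \<Rightarrow> real) \<Rightarrow> 'a set" where
  "unit_ball N = {x. N x \<le> 1}"

definition p_convex :: "real \<Rightarrow> 'a::real_vector set \<Rightarrow> bool" where
  "p_convex p A \<longleftrightarrow>
     (\<forall>x\<in>A. \<forall>y\<in>A. \<forall>s t. 0 \<le> s \<and> 0 \<le> t \<and> s powr p + t powr p = 1 \<longrightarrow>
        s *\<^sub>R x + t *\<^sub>R y \<in> A)"

definition co_p :: "real \<Rightarrow> 'a::real_vector set \<Rightarrow> 'a set" where
  "co_p p A = \<Inter>{C. A \<subseteq> C \<and> p_convex p C}"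

definition bases_in :: "'a::real_vector set \<Rightarrow> 'a set set" where
  "bases_in Z = {b. b \<subseteq> Z \<and> independent b \<and> span b = UNIV}"

definition rep_values :: "real \<Rightarrow> 'a::real_vector set \<Rightarrow> 'a \<Rightarrow> real set" where
  "rep_values p Z x =
     {(\<Sum>v\<in>b. \<bar>a v\<bar> powr p) powr (1/p) | b a.
        b \<in> bases_in Z \<and> x = (\<Sum>v\<in>b. a v *\<^sub>R v)}"

end

theory Submission
  imports Defs
begin

(* Every vector of a basis taken from Z has norm at most 1, so the p-triangle inequality gives
   N x <= (sum |a_v|^p)^(1/p) for every representation x = sum a_v v.  Conversely, the finite
   combinations of points of Z with sum |a_v|^p <= 1 form a p-convex set containing Z, hence
   containing the unit ball; after scaling, x is such a combination with sum |a_v|^p <= N x ^ p.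
   A linear dependence u among the points used can be eliminated without increasing
   sum |a_v|^p: between the first parameters t on either side of 0 at which some coefficient of
   a + t u vanishes, t |-> sum |a_v + t u_v|^p is concave (s |-> s^p is concave for p <= 1),
   so it is no larger at one of these endpoints than at 0.  Iterating yields a representation
   on an independent subset of Z, which extends to a basis inside Z because Z spans. *)

lemma concave_on_powr:
  fixes p :: real
  assumes "0 < p" "p \<le> 1"
  shows "concave_on {0..} (\<lambda>x. x powr p)"
proof -
  have interior: "concave_on {0<..} (\<lambda>x::real. x powr p)"
  proof (rule f''_le0_imp_concave)
    show "((\<lambda>x. x powr p) has_real_derivative p * x powr (p - 1)) (at x)" if "x \<in> {0<..}" for x
      using that by (auto intro!: derivative_eq_intros)
    show "((\<lambda>x. p * x powr (p - 1)) has_real_derivative p * ((p - 1) * x powr (p - 1 - 1))) (at x)"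
      if "x \<in> {0<..}" for x
      using that by (auto intro!: derivative_eq_intros)
    show "p * ((p - 1) * x powr (p - 1 - 1)) \<le> 0" for x
      using assms by (intro mult_nonneg_nonpos mult_nonpos_nonneg) auto
  qed simp
  show ?thesis
  proof (unfold concave_on_iff, intro conjI ballI allI impI)
    fix x y u v :: real
    assume x: "x \<in> {0..}" and y: "y \<in> {0..}" and uv: "0 \<le> u" "0 \<le> v" "u + v = 1"
    have scaled: "s * z powr p \<le> (s * z) powr p" if "0 \<le> s" "s \<le> 1" "0 \<le> z" for s z :: real
      using that assms powr_mono'[of p 1 s] by (simp add: powr_mult mult_right_mono)
    show "u * x powr p + v * y powr p \<le> (u *\<^sub>R x + v *\<^sub>R y) powr p"
    proof (cases "x = 0 \<or> y = 0")
      case True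
      then show ?thesis using x y uv scaled by auto
    next
      case False
      then show ?thesis using x y uv interior by (auto simp: concave_on_iff)
    qed
  qed simp
qed

lemma concave_on_affine_comp:
  fixes g :: "real \<Rightarrow> real"
  assumes "concave_on S g" "convex I" "\<And>t. t \<in> I \<Longrightarrow> a + t * c \<in> S"
  shows "concave_on I (\<lambda>t. g (a + t * c))"
proof -
  have "a + (u * x + v * y) * c = u *\<^sub>R (a + x * c) + v *\<^sub>R (a + y * c)"
    if "u + v = 1" for u v x y :: real
    using that by (simp add: algebra_simps) (metis distrib_left mult.right_neutral)
  with assms show ?thesis
    unfolding concave_on_iff by simp
qed

lemma concave_on_sum_fun:
  assumes "finite A" "convex S" "\<And>i. i \<in> A \<Longrightarrow> concave_on S (f i)"
  shows "concave_on S (\<lambda>x. \<Sum>i\<in>A. f i x)"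
  using assms by (induction A rule: finite_induct) (auto simp: concave_on_const intro: concave_on_add)

lemma first_zero_crossing:
  fixes a c :: "'b \<Rightarrow> real"
  assumes "finite F" "\<And>v. v \<in> F \<Longrightarrow> 0 < a v" "w \<in> F" "c w < 0"
  obtains t where "0 < t" "\<exists>v\<in>F. a v + t * c v = 0"
    "\<And>v s. v \<in> F \<Longrightarrow> 0 \<le> s \<Longrightarrow> s \<le> t \<Longrightarrow> 0 \<le> a v + s * c v"
proof -
  define P where "P = {v\<in>F. c v < 0}"
  define t where "t = Min ((\<lambda>v. a v / - c v) ` P)"
  have "finite P" "w \<in> P"
    using assms by (auto simp: P_def)
  then have "t \<in> (\<lambda>v. a v / - c v) ` P"
    unfolding t_def by (intro Min_in) auto
  then obtain v0 where v0: "v0 \<in> P" "t = a v0 / - c v0"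
    by blast
  have t_le: "t \<le> a v / - c v" if "v \<in> P" for v
    using \<open>finite P\<close> that by (simp add: t_def)
  show ?thesis
  proof
    have "v0 \<in> F" "c v0 < 0"
      using v0(1) by (auto simp: P_def)
    then show "0 < t" "\<exists>v\<in>F. a v + t * c v = 0"
      using assms(2) unfolding v0(2) by (auto simp: divide_less_0_iff intro!: bexI[of _ v0])
  next
    fix v s assume v: "v \<in> F" and s: "0 \<le> s" "s \<le> t"
    show "0 \<le> a v + s * c v"
    proof (cases "c v < 0")
      case True
      then have "s \<le> a v / - c v"
        using v s t_le[of v] by (simp add: P_def)
      with True have "s * - c v \<le> a v"
        by (subst (asm) pos_le_divide_eq) auto
      then show ?thesis
        by simp
    next
      case False
      with v s assms(2)[of v] show ?thesis
        by (simp add: add_pos_nonneg)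
    qed
  qed
qed

lemma shift_to_zero_psum_le_nonpos:
  fixes a c :: "'b \<Rightarrow> real"
  assumes "finite F" "\<And>v. v \<in> F \<Longrightarrow> 0 < a v" "\<And>v. v \<in> F \<Longrightarrow> c v \<le> 0"
    "w \<in> F" "c w < 0" "0 \<le> p"
  shows "\<exists>t. \<exists>v\<in>F. a v + t * c v = 0 \<and>
           (\<Sum>v\<in>F. \<bar>a v + t * c v\<bar> powr p) \<le> (\<Sum>v\<in>F. a v powr p)"
proof -
  obtain t where t: "0 < t" "\<exists>v\<in>F. a v + t * c v = 0"
    "\<And>v. v \<in> F \<Longrightarrow> 0 \<le> a v + t * c v"
    using first_zero_crossing[of F a w c] assms by (metis less_eq_real_def)
  have "(\<Sum>v\<in>F. \<bar>a v + t * c v\<bar> powr p) \<le> (\<Sum>v\<in>F. a v powr p)"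
  proof (rule sum_mono)
    fix v assume "v \<in> F"
    then show "\<bar>a v + t * c v\<bar> powr p \<le> a v powr p"
      using t assms(3,6) by (intro powr_mono2) (auto simp: mult_nonneg_nonpos)
  qed
  with t show ?thesis
    by blast
qed

lemma shift_to_zero_psum_le_mixed:
  fixes a c :: "'b \<Rightarrow> real"
  assumes "finite F" "\<And>v. v \<in> F \<Longrightarrow> 0 < a v" "v1 \<in> F" "c v1 < 0" "v2 \<in> F" "0 < c v2"
    "0 < p" "p \<le> 1"
  shows "\<exists>t. \<exists>v\<in>F. a v + t * c v = 0 \<and>
           (\<Sum>v\<in>F. \<bar>a v + t * c v\<bar> powr p) \<le> (\<Sum>v\<in>F. a v powr p)"
proof -
  obtain t where t: "0 < t" "\<exists>v\<in>F. a v + t * c v = 0"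
    "\<And>v s. v \<in> F \<Longrightarrow> 0 \<le> s \<Longrightarrow> s \<le> t \<Longrightarrow> 0 \<le> a v + s * c v"
    using first_zero_crossing[of F a v1 c] assms(1-4) by blast
  obtain s where s: "0 < s" "\<exists>v\<in>F. a v + s * - c v = 0"
    "\<And>v r. v \<in> F \<Longrightarrow> 0 \<le> r \<Longrightarrow> r \<le> s \<Longrightarrow> 0 \<le> a v + r * - c v"
    using first_zero_crossing[of F a v2 "\<lambda>v. - c v"] assms(1,2,5,6) by auto
  have nonneg_on: "0 \<le> a v + r * c v" if "v \<in> F" "r \<in> {- s..t}" for v r
    using that t(3)[of v r] s(3)[of v "- r"] by (cases "0 \<le> r") auto
  define \<phi> where "\<phi> r = (\<Sum>v\<in>F. (a v + r * c v) powr p)" for r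
  have "concave_on {- s..t} \<phi>"
    unfolding \<phi>_def using assms nonneg_on
    by (intro concave_on_sum_fun concave_on_affine_comp[OF concave_on_powr]) auto
  then have "min (\<phi> (- s)) (\<phi> t) \<le> \<phi> 0"
    using s t by (intro concave_on_ge_min) auto
  moreover have "\<phi> 0 = (\<Sum>v\<in>F. a v powr p)"
    by (simp add: \<phi>_def)
  moreover have "\<phi> r = (\<Sum>v\<in>F. \<bar>a v + r * c v\<bar> powr p)" if "r \<in> {- s..t}" for r
    unfolding \<phi>_def using nonneg_on that by (intro sum.cong) auto
  then have "\<phi> (- s) = (\<Sum>v\<in>F. \<bar>a v + - s * c v\<bar> powr p)"
    "\<phi> t = (\<Sum>v\<in>F. \<bar>a v + t * c v\<bar> powr p)"
    using s(1) t(1) by auto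
  ultimately show ?thesis
    using s(2) t(2) by (cases "\<phi> (- s) \<le> \<phi> t")
      (force intro: exI[of _ "- s"] exI[of _ t] simp: min_def)+
qed

lemma shift_to_zero_psum_le_pos:
  fixes a c :: "'b \<Rightarrow> real"
  assumes "finite F" "\<And>v. v \<in> F \<Longrightarrow> 0 < a v" "w \<in> F" "c w \<noteq> 0" "0 < p" "p \<le> 1"
  shows "\<exists>t. \<exists>v\<in>F. a v + t * c v = 0 \<and>
           (\<Sum>v\<in>F. \<bar>a v + t * c v\<bar> powr p) \<le> (\<Sum>v\<in>F. a v powr p)"
proof -
  consider (nonpos) "\<And>v. v \<in> F \<Longrightarrow> c v \<le> 0" | (nonneg) "\<And>v. v \<in> F \<Longrightarrow> 0 \<le> c v"
    | (mixed) v1 v2 where "v1 \<in> F" "c v1 < 0" "v2 \<in> F" "0 < c v2"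
    by (meson linorder_not_le)
  then show ?thesis
  proof cases
    case nonpos
    with assms show ?thesis
      by (intro shift_to_zero_psum_le_nonpos) (auto simp: order_le_less)
  next
    case nonneg
    then obtain t where "\<exists>v\<in>F. a v + t * - c v = 0 \<and>
        (\<Sum>v\<in>F. \<bar>a v + t * - c v\<bar> powr p) \<le> (\<Sum>v\<in>F. a v powr p)"
      using assms shift_to_zero_psum_le_nonpos[of F a "\<lambda>v. - c v" w p] by force
    then show ?thesis
      by (intro exI[of _ "- t"]) simp
  next
    case mixed
    with assms show ?thesis
      by (intro shift_to_zero_psum_le_mixed) auto
  qed
qed

lemma shift_to_zero_psum_le:
  fixes a u :: "'b \<Rightarrow> real"
  assumes "finite F" "\<And>v. v \<in> F \<Longrightarrow> a v \<noteq> 0" "w \<in> F" "u w \<noteq> 0" "0 < p" "p \<le> 1"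
  shows "\<exists>t. \<exists>v\<in>F. a v + t * u v = 0 \<and>
           (\<Sum>v\<in>F. \<bar>a v + t * u v\<bar> powr p) \<le> (\<Sum>v\<in>F. \<bar>a v\<bar> powr p)"
proof -
  define c where "c v = sgn (a v) * u v" for v
  have factor: "a v + t * u v = sgn (a v) * (\<bar>a v\<bar> + t * c v)" if "v \<in> F" for v t
    using assms(2)[OF that] by (cases "0 < a v") (auto simp: c_def algebra_simps)
  then have abs_eq: "\<bar>a v + t * u v\<bar> = \<bar>\<bar>a v\<bar> + t * c v\<bar>" if "v \<in> F" for v t
    using that assms(2) by (simp add: abs_mult)
  have "c w \<noteq> 0"
    using assms(2-4) by (auto simp: c_def sgn_0_0)
  then have "\<exists>t. \<exists>v\<in>F. \<bar>a v\<bar> + t * c v = 0 \<and>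
      (\<Sum>v\<in>F. \<bar>\<bar>a v\<bar> + t * c v\<bar> powr p) \<le> (\<Sum>v\<in>F. \<bar>a v\<bar> powr p)"
    using assms by (intro shift_to_zero_psum_le_pos) auto
  then obtain t v where "v \<in> F" "\<bar>a v\<bar> + t * c v = 0"
    "(\<Sum>v\<in>F. \<bar>\<bar>a v\<bar> + t * c v\<bar> powr p) \<le> (\<Sum>v\<in>F. \<bar>a v\<bar> powr p)"
    by blast
  with factor abs_eq show ?thesis
    by (intro exI[of _ t] bexI[of _ v]) (auto cong: sum.cong)
qed

lemma dependent_eliminate_coefficient:
  fixes F :: "'a::real_vector set" and a :: "'a \<Rightarrow> real"
  assumes "finite F" "dependent F" "0 < p" "p \<le> 1"
  obtains b v0 where "v0 \<in> F" "b v0 = 0" "(\<Sum>v\<in>F. b v *\<^sub>R v) = (\<Sum>v\<in>F. a v *\<^sub>R v)"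
    "(\<Sum>v\<in>F. \<bar>b v\<bar> powr p) \<le> (\<Sum>v\<in>F. \<bar>a v\<bar> powr p)"
proof (cases "\<exists>v\<in>F. a v = 0")
  case True
  then show ?thesis
    using that by blast
next
  case False
  obtain u w where u: "w \<in> F" "u w \<noteq> 0" "(\<Sum>v\<in>F. u v *\<^sub>R v) = 0"
    using assms(1,2) real_vector.dependent_finite by blast
  obtain t v0 where "v0 \<in> F" "a v0 + t * u v0 = 0"
    "(\<Sum>v\<in>F. \<bar>a v + t * u v\<bar> powr p) \<le> (\<Sum>v\<in>F. \<bar>a v\<bar> powr p)"
    using shift_to_zero_psum_le[of F a w u p] False u(1,2) assms by blast
  moreover have "(\<Sum>v\<in>F. (a v + t * u v) *\<^sub>R v) = (\<Sum>v\<in>F. a v *\<^sub>R v)"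
    using u(3) by (simp add: scaleR_add_left sum.distrib flip: scaleR_scaleR scaleR_sum_right)
  ultimately show ?thesis
    using that[of v0 "\<lambda>v. a v + t * u v"] by blast
qed

lemma exists_independent_representation_psum_le:
  fixes F :: "'a::real_vector set" and a :: "'a \<Rightarrow> real"
  assumes "finite F" "0 < p" "p \<le> 1"
  shows "\<exists>G b. G \<subseteq> F \<and> independent G \<and> (\<Sum>v\<in>G. b v *\<^sub>R v) = (\<Sum>v\<in>F. a v *\<^sub>R v)
           \<and> (\<Sum>v\<in>G. \<bar>b v\<bar> powr p) \<le> (\<Sum>v\<in>F. \<bar>a v\<bar> powr p)"
  using assms(1)
proof (induction "card F" arbitrary: F a rule: less_induct)
  case less
  show ?case
  proof (cases "independent F")
    case True
    then show ?thesis
      by blast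
  next
    case False
    obtain b v0 where b: "v0 \<in> F" "b v0 = 0" "(\<Sum>v\<in>F. b v *\<^sub>R v) = (\<Sum>v\<in>F. a v *\<^sub>R v)"
      "(\<Sum>v\<in>F. \<bar>b v\<bar> powr p) \<le> (\<Sum>v\<in>F. \<bar>a v\<bar> powr p)"
      using dependent_eliminate_coefficient[of F p a] less.prems False assms(2,3) by blast
    have "card (F - {v0}) < card F"
      using less.prems b(1) by (intro card_Diff1_less)
    then obtain G c where "G \<subseteq> F - {v0}" "independent G"
      "(\<Sum>v\<in>G. c v *\<^sub>R v) = (\<Sum>v\<in>F - {v0}. b v *\<^sub>R v)"
      "(\<Sum>v\<in>G. \<bar>c v\<bar> powr p) \<le> (\<Sum>v\<in>F - {v0}. \<bar>b v\<bar> powr p)"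
      using less.hyps less.prems by blast
    with b less.prems show ?thesis
      by (intro exI[of _ G] exI[of _ c]) (auto simp: sum_diff1)
  qed
qed

lemma powr_add_le_add_powr:
  fixes x y p :: real
  assumes "0 \<le> x" "0 \<le> y" "0 < p" "p \<le> 1"
  shows "(x + y) powr p \<le> x powr p + y powr p"
proof (cases "x + y = 0")
  case True
  then show ?thesis
    using assms by simp
next
  case False
  then have s: "0 < x + y"
    using assms by simp
  have le_powr: "z \<le> z powr p" if "0 \<le> z" "z \<le> 1" for z
    using powr_mono'[of p 1 z] that assms by simp
  have "(x + y) powr p = (x + y) powr p * (x / (x + y) + y / (x + y))"
    using s by (simp flip: add_divide_distrib)
  also have "\<dots> \<le> (x + y) powr p * ((x / (x + y)) powr p + (y / (x + y)) powr p)"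
    using s assms by (intro mult_left_mono add_mono le_powr) auto
  also have "\<dots> = x powr p + y powr p"
    using s assms by (simp add: powr_divide distrib_left)
  finally show ?thesis .
qed

lemma pnorm_sum_powr_le:
  fixes N :: "'a::real_vector \<Rightarrow> real" and f :: "'b \<Rightarrow> 'a"
  assumes "is_pnorm p N"
  shows "N (\<Sum>v\<in>B. f v) powr p \<le> (\<Sum>v\<in>B. N (f v) powr p)"
proof (induction B rule: infinite_finite_induct)
  case (insert v B)
  have "N (f v + (\<Sum>v\<in>B. f v)) powr p \<le> N (f v) powr p + N (\<Sum>v\<in>B. f v) powr p"
    using assms(1) unfolding is_pnorm_def by blast
  with insert show ?case
    by simp
qed (use assms in \<open>auto simp: is_pnorm_def\<close>)

lemma pnorm_lincomb_le:
  fixes N :: "'a::real_vector \<Rightarrow> real"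
  assumes N: "is_pnorm p N" and "0 < p" and "\<And>v. v \<in> B \<Longrightarrow> N v \<le> 1"
  shows "N (\<Sum>v\<in>B. a v *\<^sub>R v) \<le> (\<Sum>v\<in>B. \<bar>a v\<bar> powr p) powr (1 / p)"
proof -
  have N_nonneg: "0 \<le> N y" for y
    using N by (simp add: is_pnorm_def)
  have "N (\<Sum>v\<in>B. a v *\<^sub>R v) powr p \<le> (\<Sum>v\<in>B. N (a v *\<^sub>R v) powr p)"
    by (rule pnorm_sum_powr_le[OF N])
  also have "\<dots> \<le> (\<Sum>v\<in>B. \<bar>a v\<bar> powr p)"
  proof (rule sum_mono)
    fix v assume "v \<in> B"
    then have "\<bar>a v\<bar> * N v \<le> \<bar>a v\<bar>"
      using assms(3) by (simp add: mult_left_le)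
    then show "N (a v *\<^sub>R v) powr p \<le> \<bar>a v\<bar> powr p"
      using N \<open>0 < p\<close> N_nonneg[of v] by (intro powr_mono2) (auto simp: is_pnorm_def)
  qed
  finally have "(N (\<Sum>v\<in>B. a v *\<^sub>R v) powr p) powr (1 / p) \<le> (\<Sum>v\<in>B. \<bar>a v\<bar> powr p) powr (1 / p)"
    using \<open>0 < p\<close> by (intro powr_mono2) auto
  then show ?thesis
    using \<open>0 < p\<close> N_nonneg by (simp add: powr_powr)
qed

definition p_combinations :: "real \<Rightarrow> 'a::real_vector set \<Rightarrow> 'a set" where
  "p_combinations p Z =
     {(\<Sum>v\<in>F. a v *\<^sub>R v) | F a. finite F \<and> F \<subseteq> Z \<and> (\<Sum>v\<in>F. \<bar>a v\<bar> powr p) \<le> 1}"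

lemma lincomb_zero_extension:
  fixes a :: "'a::real_vector \<Rightarrow> real"
  assumes "finite H" "F \<subseteq> H"
  shows "(\<Sum>v\<in>H. (if v \<in> F then a v else 0) *\<^sub>R v) = (\<Sum>v\<in>F. a v *\<^sub>R v)"
    and "(\<Sum>v\<in>H. \<bar>if v \<in> F then a v else 0\<bar> powr p) = (\<Sum>v\<in>F. \<bar>a v\<bar> powr p)"
  using assms by (auto intro!: sum.mono_neutral_cong_right)

lemma subset_p_combinations: "Z \<subseteq> p_combinations p Z"
proof
  fix z assume "z \<in> Z"
  then show "z \<in> p_combinations p Z"
    unfolding p_combinations_def by (intro CollectI exI[of _ "{z}"] exI[of _ "\<lambda>_. 1"]) auto
qed

lemma p_convex_p_combinations:
  assumes "0 < p" "p \<le> 1"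
  shows "p_convex p (p_combinations p Z)"
  unfolding p_convex_def
proof (intro ballI allI impI)
  fix y1 y2 s t
  assume "y1 \<in> p_combinations p Z" "y2 \<in> p_combinations p Z"
    and st: "0 \<le> s \<and> 0 \<le> t \<and> s powr p + t powr p = 1"
  then obtain F1 a1 F2 a2 where F: "finite F1" "F1 \<subseteq> Z" "finite F2" "F2 \<subseteq> Z"
    and y: "y1 = (\<Sum>v\<in>F1. a1 v *\<^sub>R v)" "y2 = (\<Sum>v\<in>F2. a2 v *\<^sub>R v)"
    and le1: "(\<Sum>v\<in>F1. \<bar>a1 v\<bar> powr p) \<le> 1" "(\<Sum>v\<in>F2. \<bar>a2 v\<bar> powr p) \<le> 1"
    unfolding p_combinations_def by blast
  define H where "H = F1 \<union> F2"
  define b1 where "b1 v = (if v \<in> F1 then a1 v else 0)" for v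
  define b2 where "b2 v = (if v \<in> F2 then a2 v else 0)" for v
  have H: "finite H" "F1 \<subseteq> H" "F2 \<subseteq> H"
    using F by (auto simp: H_def)
  note ext1 = lincomb_zero_extension[OF H(1,2), of a1, folded b1_def]
  note ext2 = lincomb_zero_extension[OF H(1,3), of a2, folded b2_def]
  have combination: "s *\<^sub>R y1 + t *\<^sub>R y2 = (\<Sum>v\<in>H. (s * b1 v + t * b2 v) *\<^sub>R v)"
    by (simp add: y ext1(1)[symmetric] ext2(1)[symmetric] scaleR_sum_right scaleR_add_left sum.distrib)
  have "(\<Sum>v\<in>H. \<bar>s * b1 v + t * b2 v\<bar> powr p)
      \<le> (\<Sum>v\<in>H. s powr p * \<bar>b1 v\<bar> powr p + t powr p * \<bar>b2 v\<bar> powr p)"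
  proof (rule sum_mono)
    fix v
    have "\<bar>s * b1 v + t * b2 v\<bar> powr p \<le> (\<bar>s * b1 v\<bar> + \<bar>t * b2 v\<bar>) powr p"
      using assms by (intro powr_mono2 abs_triangle_ineq) auto
    also have "\<dots> \<le> \<bar>s * b1 v\<bar> powr p + \<bar>t * b2 v\<bar> powr p"
      using assms by (intro powr_add_le_add_powr) auto
    finally show "\<bar>s * b1 v + t * b2 v\<bar> powr p \<le> s powr p * \<bar>b1 v\<bar> powr p + t powr p * \<bar>b2 v\<bar> powr p"
      using st by (simp add: abs_mult powr_mult)
  qed
  also have "\<dots> \<le> s powr p * 1 + t powr p * 1"
    using le1 by (simp add: sum.distrib ext1(2) ext2(2) flip: sum_distrib_left)
      (intro add_mono mult_left_le; simp)
  finally have "(\<Sum>v\<in>H. \<bar>s * b1 v + t * b2 v\<bar> powr p) \<le> 1"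
    using st by simp
  with combination show "s *\<^sub>R y1 + t *\<^sub>R y2 \<in> p_combinations p Z"
    using F unfolding p_combinations_def
    by (intro CollectI exI[of _ H] exI[of _ "\<lambda>v. s * b1 v + t * b2 v"]) (auto simp: H_def)
qed

lemma co_p_least: "A \<subseteq> C \<Longrightarrow> p_convex p C \<Longrightarrow> co_p p A \<subseteq> C"
  unfolding co_p_def by blast

lemma p_convex_span: "p_convex p (span S)"
  unfolding p_convex_def by (auto intro: span_add span_scale)

lemma span_eq_UNIV_if_unit_ball_subset:
  assumes N: "is_pnorm p N" and ball: "unit_ball N \<subseteq> span Z"
  shows "span Z = UNIV"
proof -
  have "y \<in> span Z" for y
  proof (cases "y = 0")
    case False
    with N have "0 < N y" "N ((1 / N y) *\<^sub>R y) = 1"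
      by (auto simp: is_pnorm_def order_le_less)
    then have "(1 / N y) *\<^sub>R y \<in> span Z"
      using ball unfolding unit_ball_def by (metis mem_Collect_eq order_refl subsetD)
    then have "N y *\<^sub>R ((1 / N y) *\<^sub>R y) \<in> span Z"
      by (rule span_scale)
    with \<open>0 < N y\<close> show ?thesis
      by simp
  qed (simp add: span_zero)
  then show ?thesis
    by blast
qed

lemma exists_lincomb_psum_le_pnorm:
  fixes N :: "'a::real_vector \<Rightarrow> real"
  assumes N: "is_pnorm p N" and ball: "unit_ball N \<subseteq> p_combinations p Z"
  obtains F a where "finite F" "F \<subseteq> Z" "x = (\<Sum>v\<in>F. a v *\<^sub>R v)"
    "(\<Sum>v\<in>F. \<bar>a v\<bar> powr p) \<le> N x powr p"
proof (cases "x = 0")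
  case True
  then show ?thesis
    using that[of "{}"] by simp
next
  case False
  with N have n: "0 < N x" "N ((1 / N x) *\<^sub>R x) = 1"
    by (auto simp: is_pnorm_def order_le_less)
  obtain F a where F: "finite F" "F \<subseteq> Z" "(1 / N x) *\<^sub>R x = (\<Sum>v\<in>F. a v *\<^sub>R v)"
    "(\<Sum>v\<in>F. \<bar>a v\<bar> powr p) \<le> 1"
    using ball n(2) unfolding unit_ball_def p_combinations_def by force
  have "x = N x *\<^sub>R ((1 / N x) *\<^sub>R x)"
    using n(1) by simp
  also have "\<dots> = (\<Sum>v\<in>F. (N x * a v) *\<^sub>R v)"
    by (simp add: F(3) scaleR_sum_right)
  finally have "x = (\<Sum>v\<in>F. (N x * a v) *\<^sub>R v)" .
  moreover have "(\<Sum>v\<in>F. \<bar>N x * a v\<bar> powr p) \<le> N x powr p"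
    using F(4) n(1) by (simp add: abs_mult powr_mult flip: sum_distrib_left)
  ultimately show ?thesis
    by (rule that[OF F(1,2)])
qed

lemma extend_to_basis_in:
  assumes "span Z = UNIV" "G \<subseteq> Z" "independent G"
  shows "\<exists>B. G \<subseteq> B \<and> B \<in> bases_in Z"
proof -
  obtain B where B: "G \<subseteq> B" "B \<subseteq> Z" "independent B" "Z \<subseteq> span B"
    using real_vector.maximal_independent_subset_extend[OF assms(2,3)] by blast
  then have "span B = UNIV"
    using assms(1) span_minimal[OF B(4) subspace_span] by blast
  with B show ?thesis
    unfolding bases_in_def by blast
qed

lemma rep_values_intro_subset:
  assumes "B \<in> bases_in Z" "finite B" "G \<subseteq> B" "x = (\<Sum>v\<in>G. b v *\<^sub>R v)"
  shows "(\<Sum>v\<in>G. \<bar>b v\<bar> powr p) powr (1 / p) \<in> rep_values p Z x"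
proof -
  note extension = lincomb_zero_extension[OF assms(2,3), of b]
  show ?thesis
    unfolding rep_values_def
    by (intro CollectI exI[of _ B] exI[of _ "\<lambda>v. if v \<in> G then b v else 0"])
      (simp add: assms(1,4) extension)
qed

lemma pnorm_le_rep_values:
  assumes "is_pnorm p N" "0 < p" "Z \<subseteq> unit_ball N" "s \<in> rep_values p Z x"
  shows "N x \<le> s"
proof -
  obtain B a where "s = (\<Sum>v\<in>B. \<bar>a v\<bar> powr p) powr (1 / p)" "B \<in> bases_in Z"
    "x = (\<Sum>v\<in>B. a v *\<^sub>R v)"
    using assms(4) unfolding rep_values_def by blast
  moreover have "N v \<le> 1" if "v \<in> B" for v
    using that \<open>B \<in> bases_in Z\<close> assms(3) by (auto simp: bases_in_def unit_ball_def)
  ultimately show ?thesis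
    using pnorm_lincomb_le[OF assms(1,2)] by simp
qed

lemma rep_value_le_pnorm:
  fixes N :: "'a::real_vector \<Rightarrow> real"
  assumes N: "is_pnorm p N" and p: "0 < p" "p \<le> 1"
    and ball: "unit_ball N \<subseteq> p_combinations p Z" and span_Z: "span Z = UNIV"
    and finite_indep: "\<And>B :: 'a set. independent B \<Longrightarrow> finite B"
  shows "\<exists>s\<in>rep_values p Z x. s \<le> N x"
proof -
  obtain F a where F: "finite F" "F \<subseteq> Z" "x = (\<Sum>v\<in>F. a v *\<^sub>R v)"
    "(\<Sum>v\<in>F. \<bar>a v\<bar> powr p) \<le> N x powr p"
    using exists_lincomb_psum_le_pnorm[OF N ball] .
  obtain G b where G: "G \<subseteq> F" "independent G" "(\<Sum>v\<in>G. b v *\<^sub>R v) = (\<Sum>v\<in>F. a v *\<^sub>R v)"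
    "(\<Sum>v\<in>G. \<bar>b v\<bar> powr p) \<le> (\<Sum>v\<in>F. \<bar>a v\<bar> powr p)"
    using exists_independent_representation_psum_le[OF F(1) p, of a] by blast
  have x_G: "x = (\<Sum>v\<in>G. b v *\<^sub>R v)"
    using G(3) F(3) by simp
  obtain B where B: "G \<subseteq> B" "B \<in> bases_in Z"
    using extend_to_basis_in[OF span_Z] G(1,2) F(2) by blast
  then have "finite B"
    using finite_indep unfolding bases_in_def by blast
  then have "(\<Sum>v\<in>G. \<bar>b v\<bar> powr p) powr (1 / p) \<in> rep_values p Z x"
    by (rule rep_values_intro_subset[OF B(2) _ B(1) x_G])
  moreover have "(\<Sum>v\<in>G. \<bar>b v\<bar> powr p) powr (1 / p) \<le> (N x powr p) powr (1 / p)"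
    using G(4) F(4) p(1) by (intro powr_mono2) (auto intro: sum_nonneg)
  moreover have "(N x powr p) powr (1 / p) = N x"
    using N p(1) by (simp add: powr_powr is_pnorm_def)
  ultimately show ?thesis
    by auto
qed

theorem lemma2p4:
  fixes p :: real and N :: "'a::real_vector \<Rightarrow> real" and Z :: "'a set" and x :: 'a
  assumes "0 < p" and "p \<le> 1"
    and "is_pBanach p N"
    and "\<exists>S. finite S \<and> span S = (UNIV :: 'a set)"
    and "(UNIV :: 'a set) \<noteq> {0}"
    and "Z \<subseteq> unit_ball N"
    and "uminus ` Z = Z"
    and "co_p p Z = unit_ball N"
  shows "N x \<in> rep_values p Z x \<and> (\<forall>s\<in>rep_values p Z x. N x \<le> s)"
proof -
  have N: "is_pnorm p N"
    using assms(3) by (simp add: is_pBanach_def)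
  have lower: "\<forall>s\<in>rep_values p Z x. N x \<le> s"
    using pnorm_le_rep_values[OF N assms(1,6)] by blast
  have "unit_ball N \<subseteq> span Z"
    using assms(8) co_p_least[OF span_superset p_convex_span] by blast
  then have span_Z: "span Z = UNIV"
    by (rule span_eq_UNIV_if_unit_ball_subset[OF N])
  have ball: "unit_ball N \<subseteq> p_combinations p Z"
    using assms(1,2,8) co_p_least[OF subset_p_combinations p_convex_p_combinations] by blast
  obtain S :: "'a set" where "finite S" "span S = UNIV"
    using assms(4) by blast
  then have finite_indep: "finite B" if "independent B" for B :: "'a set"
    using real_vector.independent_span_bound[of S B] that by auto
  obtain s where "s \<in> rep_values p Z x" "s \<le> N x"
    using rep_value_le_pnorm[OF N assms(1,2) ball span_Z finite_indep] by blast
  with lower show ?thesis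
    using order.antisym by fastforce
qed

end
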